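(* Let $\Omega\subset\mathbb R^d$, $d\in\{2,3\}$, be a bounded domain of class $C^3$, let $m,f,F,\nu,\rho$ satisfy the assumptions in the context, and let $\mathbf u_0\in\mathbf L^2_\sigma(\Omega)$ and $\varphi_0\in\mathcal H_k$ with $\overline{\varphi_0}\in(-1,1)$. Then any global weak solution $(\mathbf u,\varphi,\mu)$ of the Abels–Garcke–Grün system departing from $(\mathbf u_0,\varphi_0)$ satisfies $\lim_{t\to\infty}\|\mathbf u(t)\|_{L^2(\Omega)}=0$.
   Context: Assumptions: $m\in C([-1,1])$, $0<m_*\le m\le m^*$ on $[-1,1]$. $f(s)=F(s)-\frac{\theta_0}{2}s^2$ on $[-1,1]$, $\theta_0>0$, $F\in C([-1,1])\cap C^2(-1,1)$, $F'(r)\to\mp\infty$ as $r\to\mp1$, $F''\ge\theta\in(0,\theta_0)$, $F(0)=F'(0)=0$, $f=F=+\infty$ outside $[-1,1]$. $\nu\in W^{1,\infty}(\mathbb R)$ with $0<\nu_*\le\nu\le\nu^*$. $\rho(s)=\frac{1+s}{2}\rho_1+\frac{1-s}{2}\rho_2$ with $\rho_1,\rho_2>0$; $\rho_*=\min\{\rho_1,\rho_2\}$, $\rho^*=\max\{\rho_1,\rho_2\}$. $\mathbf L^2_\sigma(\Omega)$ is the $L^2$-closure of smooth compactly supported divergence-free fields, $\mathbf H^1_\sigma=\mathbf L^2_\sigma\cap\mathbf H^1$; $D\mathbf u$ is the symmetric gradient. $E(v)=\frac12\int_\Omega|\nabla v|^2+\int_\Omega f(v)$; $E_{tot}(\mathbf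 u,\varphi)=\frac12\int_\Omega\rho(\varphi)|\mathbf u|^2+E(\varphi)$. $\mathcal H_k=\{\varphi\in H^1(\Omega):\|\varphi\|_{L^\infty}\le1,\ |\overline\varphi|=k\}$, $k\in[0,1)$. A global weak solution departing from $(\mathbf u_0,\varphi_0)$ is $(\mathbf u,\varphi,\mu)$ with $\mathbf u\in BC_w([0,\infty);\mathbf L^2_\sigma)\cap L^2(0,\infty;\mathbf H^1_\sigma)$, $\varphi\in BC_w([0,\infty);H^1)\cap L^2_{uloc}([0,\infty);H^2)$, $|\varphi|<1$ a.e., $\partial_t\varphi\in L^2(0,\infty;H^1_{(0)}(\Omega)')$, $\mu\in L^2_{uloc}([0,\infty);H^1)$, $\mathbf u(0)=\mathbf u_0$, $\varphi(0)=\varphi_0$, such that for every $T>0$ and every $\mathbf w\in C_0^\infty(\Omega\times(0,T))^d$ with $\operatorname{div}\mathbf w=0$: $\int_0^T\big(-(\rho(\varphi)\mathbf u,\partial_t\mathbf w)-(\rho(\varphi)\mathbf u\otimes\mathbf u,D\mathbf w)+(\nu(\varphi)D\mathbf u,D\mathbf w)-(\mathbf u,(\mathbf J\cdot\nabla)\mathbf w)\big)d\tau=-\int_0^T(\varphi\nabla\mu,\mathbf w)d\tau$, where $\mathbf J=-\frac{\rho_1-\rho_2}{2}m(\varphi)\nabla\mu$; $\langle\partial_t\varphi,v\rangle-(\varphi\mathbf u,\nabla v)+(m(\varphi)\nabla\mu,\nabla v)=0$ for all $v\in H^1(\Omega)$ and a.a. $t$; $\mu=-\Delta\varphi+f'(\varphi)$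 a.e.; $\partial_{\mathbf n}\varphi=0$ on $\partial\Omega$; and for all $t\ge0$ and a.a. $s\in[0,t]$ (including $s=0$): $\frac12\int_\Omega\rho(\varphi(t))|\mathbf u(t)|^2+\int_s^t\int_\Omega\nu(\varphi)|D\mathbf u|^2\le\frac12\int_\Omega\rho(\varphi(s))|\mathbf u(s)|^2-\int_s^t\int_\Omega\mathbf u\cdot\nabla\mu\,\varphi$ and $E(\varphi(t))+\int_s^t\int_\Omega m(\varphi)|\nabla\mu|^2\le E(\varphi(s))+\int_s^t\int_\Omega\mathbf u\cdot\nabla\mu\,\varphi$ (whose sum gives $E_{tot}(\mathbf u(t),\varphi(t))+\int_s^t\int_\Omega(\nu(\varphi)|D\mathbf u|^2+m(\varphi)|\nabla\mu|^2)\le E_{tot}(\mathbf u(s),\varphi(s))$). *)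

theory Defs
  imports "HOL-Analysis.Analysis"
begin

fun Ck :: "nat \<Rightarrow> ('a::euclidean_space \<Rightarrow> 'b::real_normed_vector) \<Rightarrow> bool" where
  "Ck 0 f = continuous_on UNIV f"
| "Ck (Suc k) f = ((\<forall>x. f differentiable (at x)) \<and>
      (\<forall>b\<in>Basis. Ck k (\<lambda>x. frechet_derivative f (at x) b)))"

definition smooth :: "('a::euclidean_space \<Rightarrow> 'b::real_normed_vector) \<Rightarrow> bool" where
  "smooth f \<longleftrightarrow> (\<forall>k. Ck k f)"

definition pd :: "'a::euclidean_space \<Rightarrow> ('a \<Rightarrow> 'b::real_normed_vector) \<Rightarrow> 'a \<Rightarrow> 'b" where
  "pd b f x = frechet_derivative f (at x) b"

definition csupp_in :: "'a::euclidean_space set \<Rightarrow> ('a \<Rightarrow> 'b::real_normed_vector) \<Rightarrow> bool" where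
  "csupp_in S f \<longleftrightarrow> compact (closure {x. f x \<noteq> 0}) \<and> closure {x. f x \<noteq> 0} \<subseteq> S"

definition test_fun :: "'a::euclidean_space set \<Rightarrow> ('a \<Rightarrow> 'b::real_normed_vector) \<Rightarrow> bool" where
  "test_fun S f \<longleftrightarrow> smooth f \<and> csupp_in S f"

definition divg :: "(real^'n \<Rightarrow> real^'n) \<Rightarrow> real^'n \<Rightarrow> real" where
  "divg w x = (\<Sum>i\<in>UNIV. pd (axis i 1) (\<lambda>y. w y $ i) x)"

definition C3_domain :: "(real^'n) set \<Rightarrow> bool" where
  "C3_domain \<Omega> \<longleftrightarrow> open \<Omega> \<and> connected \<Omega> \<and> bounded \<Omega> \<and> \<Omega> \<noteq> {} \<and>
     (\<forall>x0\<in>frontier \<Omega>. \<exists>r>0. \<exists>\<psi>::real^'n \<Rightarrow> real.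
        Ck 3 \<psi> \<and> frechet_derivative \<psi> (at x0) \<noteq> (\<lambda>_. 0) \<and>
        \<Omega> \<inter> ball x0 r = {x\<in>ball x0 r. \<psi> x < 0})"

definition L2 :: "(real^'n) set \<Rightarrow> (real^'n \<Rightarrow> 'b::euclidean_space) \<Rightarrow> bool" where
  "L2 \<Omega> f \<longleftrightarrow> f \<in> borel_measurable (lebesgue_on \<Omega>) \<and>
      integrable (lebesgue_on \<Omega>) (\<lambda>x. (norm (f x))\<^sup>2)"

definition weak_pd :: "(real^'n) set \<Rightarrow> 'n \<Rightarrow> (real^'n \<Rightarrow> real) \<Rightarrow> (real^'n \<Rightarrow> real) \<Rightarrow> bool" where
  "weak_pd \<Omega> i f g \<longleftrightarrow> (\<forall>\<psi>::real^'n \<Rightarrow> real. test_fun \<Omega> \<psi> \<longrightarrow>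
      (LINT x|lebesgue_on \<Omega>. f x * pd (axis i 1) \<psi> x) = - (LINT x|lebesgue_on \<Omega>. g x * \<psi> x))"

definition weak_grad :: "(real^'n) set \<Rightarrow> (real^'n \<Rightarrow> real) \<Rightarrow> (real^'n \<Rightarrow> real^'n) \<Rightarrow> bool" where
  "weak_grad \<Omega> f G \<longleftrightarrow> L2 \<Omega> f \<and> L2 \<Omega> G \<and> (\<forall>i. weak_pd \<Omega> i f (\<lambda>x. G x $ i))"

definition H1 :: "(real^'n) set \<Rightarrow> (real^'n \<Rightarrow> real) \<Rightarrow> bool" where
  "H1 \<Omega> f \<longleftrightarrow> (\<exists>G. weak_grad \<Omega> f G)"

text \<open>vector field u in H^1 with weak Jacobian J, J x $ i $ j = partial_j u_i\<close>
definition weak_jac :: "(real^'n) set \<Rightarrow> (real^'n \<Rightarrow> real^'n) \<Rightarrow> (real^'n \<Rightarrow> real^'n^'n) \<Rightarrow> bool" where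
  "weak_jac \<Omega> u J \<longleftrightarrow> (\<forall>i. weak_grad \<Omega> (\<lambda>x. u x $ i) (\<lambda>x. J x $ i))"

definition L2sigma :: "(real^'n) set \<Rightarrow> (real^'n \<Rightarrow> real^'n) \<Rightarrow> bool" where
  "L2sigma \<Omega> u \<longleftrightarrow> L2 \<Omega> u \<and> (\<forall>\<epsilon>>0. \<exists>w::real^'n \<Rightarrow> real^'n.
      test_fun \<Omega> w \<and> (\<forall>x. divg w x = 0) \<and>
      (LINT x|lebesgue_on \<Omega>. (norm (u x - w x))\<^sup>2) < \<epsilon>)"

definition mean :: "(real^'n) set \<Rightarrow> (real^'n \<Rightarrow> real) \<Rightarrow> real" where
  "mean \<Omega> v = (LINT x|lebesgue_on \<Omega>. v x) / measure lebesgue \<Omega>"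

definition Hk :: "(real^'n) set \<Rightarrow> real \<Rightarrow> (real^'n \<Rightarrow> real) set" where
  "Hk \<Omega> k = {v. H1 \<Omega> v \<and> (AE x in lebesgue_on \<Omega>. \<bar>v x\<bar> \<le> 1) \<and> \<bar>mean \<Omega> v\<bar> = k}"

definition symgrad :: "real^'n^'n \<Rightarrow> real^'n^'n" where
  "symgrad A = (1/2) *\<^sub>R (A + transpose A)"

definition frob :: "real^'n^'n \<Rightarrow> real^'n^'n \<Rightarrow> real" where
  "frob A B = (\<Sum>i\<in>UNIV. \<Sum>j\<in>UNIV. A $ i $ j * B $ i $ j)"

definition outer :: "real^'n \<Rightarrow> real^'n \<Rightarrow> real^'n^'n" where
  "outer a b = (\<chi> i j. a $ i * b $ j)"

definition lap :: "real^'n^'n \<Rightarrow> real" where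
  "lap A = (\<Sum>i\<in>UNIV. A $ i $ i)"

text \<open>spatial Jacobian of a space-time field W(t,x): entry i j = partial_{x_j} W_i\<close>
definition Wgrad :: "(real \<times> (real^'n) \<Rightarrow> real^'n) \<Rightarrow> real \<Rightarrow> real^'n \<Rightarrow> real^'n^'n" where
  "Wgrad W t x = (\<chi> i j. pd (0, axis j 1) (\<lambda>z. W z $ i) (t, x))"

definition rho :: "real \<Rightarrow> real \<Rightarrow> real \<Rightarrow> real" where
  "rho \<rho>1 \<rho>2 s = (1 + s) / 2 * \<rho>1 + (1 - s) / 2 * \<rho>2"

definition ffun :: "(real \<Rightarrow> real) \<Rightarrow> real \<Rightarrow> real \<Rightarrow> real" where
  "ffun F \<theta>0 s = F s - \<theta>0 / 2 * s\<^sup>2"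

text \<open>Free energy E(v), with gradient G of v; equal to +infinity unless |v| \<le> 1 a.e.
  (since f = +infinity outside [-1,1]).\<close>
definition Eng :: "(real^'n) set \<Rightarrow> (real \<Rightarrow> real) \<Rightarrow> real \<Rightarrow> (real^'n \<Rightarrow> real) \<Rightarrow> (real^'n \<Rightarrow> real^'n) \<Rightarrow> ereal" where
  "Eng \<Omega> F \<theta>0 v G = (if AE x in lebesgue_on \<Omega>. \<bar>v x\<bar> \<le> 1
     then ereal ((1/2) * (LINT x|lebesgue_on \<Omega>. (norm (G x))\<^sup>2) + (LINT x|lebesgue_on \<Omega>. ffun F \<theta>0 (v x)))
     else \<infinity>)"

definition ST :: "(real^'n) set \<Rightarrow> real set \<Rightarrow> (real \<times> (real^'n)) measure" where
  "ST \<Omega> A = lebesgue_on A \<Otimes>\<^sub>M lebesgue_on \<Omega>"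

definition stint :: "(real^'n) set \<Rightarrow> real \<Rightarrow> real \<Rightarrow> (real \<Rightarrow> real^'n \<Rightarrow> real) \<Rightarrow> real" where
  "stint \<Omega> a b h = (LINT \<tau>|lebesgue_on {a..b}. (LINT x|lebesgue_on \<Omega>. h \<tau> x))"

definition global_weak_solution ::
  "(real^'n) set \<Rightarrow> (real \<Rightarrow> real) \<Rightarrow> (real \<Rightarrow> real) \<Rightarrow> real \<Rightarrow> (real \<Rightarrow> real) \<Rightarrow> real \<Rightarrow> real \<Rightarrow>
   (real^'n \<Rightarrow> real^'n) \<Rightarrow> (real^'n \<Rightarrow> real) \<Rightarrow>
   (real \<Rightarrow> real^'n \<Rightarrow> real^'n) \<Rightarrow> (real \<Rightarrow> real^'n \<Rightarrow> real) \<Rightarrow> (real \<Rightarrow> real^'n \<Rightarrow> real) \<Rightarrow> bool" where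
  "global_weak_solution \<Omega> m F \<theta>0 \<nu> \<rho>1 \<rho>2 u0 phi0 u phi mu \<longleftrightarrow>
   (\<exists>(Gu :: real \<Rightarrow> real^'n \<Rightarrow> real^'n^'n) (Gphi :: real \<Rightarrow> real^'n \<Rightarrow> real^'n)
      (Hphi :: real \<Rightarrow> real^'n \<Rightarrow> real^'n^'n) (Gmu :: real \<Rightarrow> real^'n \<Rightarrow> real^'n)
      (D :: real \<Rightarrow> (real^'n \<Rightarrow> real) \<Rightarrow> real) (g :: real \<Rightarrow> real).
     \<comment> \<open>u in BC_w([0,oo); L^2_sigma)\<close>
     (\<forall>t\<ge>0. L2sigma \<Omega> (u t)) \<and>
     (\<exists>C. \<forall>t\<ge>0. (LINT x|lebesgue_on \<Omega>. (norm (u t x))\<^sup>2) \<le> C) \<and>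
     (\<forall>w::real^'n \<Rightarrow> real^'n. L2 \<Omega> w \<longrightarrow>
        continuous_on {0..} (\<lambda>t. LINT x|lebesgue_on \<Omega>. u t x \<bullet> w x)) \<and>
     \<comment> \<open>u in L^2(0,oo; H^1_sigma)\<close>
     (\<lambda>(t,x). u t x) \<in> borel_measurable (ST \<Omega> {0..}) \<and>
     (\<lambda>(t,x). Gu t x) \<in> borel_measurable (ST \<Omega> {0..}) \<and>
     (AE t in lebesgue_on {0..}. weak_jac \<Omega> (u t) (Gu t)) \<and>
     integrable (ST \<Omega> {0..}) (\<lambda>(t,x). (norm (u t x))\<^sup>2 + (norm (Gu t x))\<^sup>2) \<and>
     \<comment> \<open>phi in BC_w([0,oo); H^1)\<close>
     (\<forall>t\<ge>0. weak_grad \<Omega> (phi t) (Gphi t)) \<and>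
     (\<exists>C. \<forall>t\<ge>0. (LINT x|lebesgue_on \<Omega>. (phi t x)\<^sup>2 + (norm (Gphi t x))\<^sup>2) \<le> C) \<and>
     (\<forall>v Gv. weak_grad \<Omega> v Gv \<longrightarrow>
        continuous_on {0..} (\<lambda>t. LINT x|lebesgue_on \<Omega>. phi t x * v x + Gphi t x \<bullet> Gv x)) \<and>
     \<comment> \<open>phi in L^2_uloc([0,oo); H^2)\<close>
     (\<lambda>(t,x). phi t x) \<in> borel_measurable (ST \<Omega> {0..}) \<and>
     (\<lambda>(t,x). Gphi t x) \<in> borel_measurable (ST \<Omega> {0..}) \<and>
     (\<lambda>(t,x). Hphi t x) \<in> borel_measurable (ST \<Omega> {0..}) \<and>
     (AE t in lebesgue_on {0..}. weak_jac \<Omega> (Gphi t) (Hphi t)) \<and>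
     (\<exists>C. \<forall>\<tau>\<ge>0. integrable (ST \<Omega> {\<tau>..\<tau>+1}) (\<lambda>(t,x). (norm (Hphi t x))\<^sup>2) \<and>
         integral\<^sup>L (ST \<Omega> {\<tau>..\<tau>+1}) (\<lambda>(t,x). (norm (Hphi t x))\<^sup>2) \<le> C) \<and>
     \<comment> \<open>|phi| < 1 a.e.\<close>
     (AE z in ST \<Omega> {0..}. \<bar>phi (fst z) (snd z)\<bar> < 1) \<and>
     \<comment> \<open>d/dt phi = D in L^2(0,oo; H^1_(0)(Omega)')\<close>
     (\<forall>v. H1 \<Omega> v \<longrightarrow> (\<lambda>t. D t v) \<in> borel_measurable (lebesgue_on {0..})) \<and>
     g \<in> borel_measurable (lebesgue_on {0..}) \<and>
     integrable (lebesgue_on {0..}) (\<lambda>t. (g t)\<^sup>2) \<and>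
     (AE t in lebesgue_on {0..}.
        (\<forall>v w a b. H1 \<Omega> v \<longrightarrow> H1 \<Omega> w \<longrightarrow> D t (\<lambda>x. a * v x + b * w x) = a * D t v + b * D t w) \<and>
        (\<forall>v Gv. weak_grad \<Omega> v Gv \<longrightarrow>
           \<bar>D t v\<bar> \<le> g t * sqrt (LINT x|lebesgue_on \<Omega>. (norm (Gv x))\<^sup>2))) \<and>
     (\<forall>v (\<zeta>::real \<Rightarrow> real). H1 \<Omega> v \<longrightarrow> test_fun {0<..} \<zeta> \<longrightarrow>
        - (LINT t|lebesgue_on {0..}. (LINT x|lebesgue_on \<Omega>. phi t x * v x) * deriv \<zeta> t)
        = (LINT t|lebesgue_on {0..}. D t v * \<zeta> t)) \<and>
     \<comment> \<open>mu in L^2_uloc([0,oo); H^1)\<close>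
     (\<lambda>(t,x). mu t x) \<in> borel_measurable (ST \<Omega> {0..}) \<and>
     (\<lambda>(t,x). Gmu t x) \<in> borel_measurable (ST \<Omega> {0..}) \<and>
     (AE t in lebesgue_on {0..}. weak_grad \<Omega> (mu t) (Gmu t)) \<and>
     (\<exists>C. \<forall>\<tau>\<ge>0. integrable (ST \<Omega> {\<tau>..\<tau>+1}) (\<lambda>(t,x). (mu t x)\<^sup>2 + (norm (Gmu t x))\<^sup>2) \<and>
         integral\<^sup>L (ST \<Omega> {\<tau>..\<tau>+1}) (\<lambda>(t,x). (mu t x)\<^sup>2 + (norm (Gmu t x))\<^sup>2) \<le> C) \<and>
     \<comment> \<open>initial data\<close>
     (AE x in lebesgue_on \<Omega>. u 0 x = u0 x) \<and>
     (AE x in lebesgue_on \<Omega>. phi 0 x = phi0 x) \<and>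
     \<comment> \<open>momentum equation, weak form\<close>
     (\<forall>T>0. \<forall>W::real \<times> (real^'n) \<Rightarrow> real^'n.
        test_fun ({0<..<T} \<times> \<Omega>) W \<and> (\<forall>t x. divg (\<lambda>y. W (t, y)) x = 0) \<longrightarrow>
        stint \<Omega> 0 T (\<lambda>\<tau> x.
            - (rho \<rho>1 \<rho>2 (phi \<tau> x) * (u \<tau> x \<bullet> pd (1, 0) W (\<tau>, x)))
            - rho \<rho>1 \<rho>2 (phi \<tau> x) * frob (outer (u \<tau> x) (u \<tau> x)) (symgrad (Wgrad W \<tau> x))
            + \<nu> (phi \<tau> x) * frob (symgrad (Gu \<tau> x)) (symgrad (Wgrad W \<tau> x))
            - (\<Sum>i\<in>UNIV. u \<tau> x $ i *
                 (\<Sum>j\<in>UNIV. (- (\<rho>1 - \<rho>2) / 2 * m (phi \<tau> x) * Gmu \<tau> x $ j) * Wgrad W \<tau> x $ i $ j)))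
        = - stint \<Omega> 0 T (\<lambda>\<tau> x. phi \<tau> x * (Gmu \<tau> x \<bullet> W (\<tau>, x)))) \<and>
     \<comment> \<open>Cahn--Hilliard equation, weak form\<close>
     (AE t in lebesgue_on {0..}. \<forall>v Gv. weak_grad \<Omega> v Gv \<longrightarrow>
        D t v - (LINT x|lebesgue_on \<Omega>. phi t x * (u t x \<bullet> Gv x))
          + (LINT x|lebesgue_on \<Omega>. m (phi t x) * (Gmu t x \<bullet> Gv x)) = 0) \<and>
     \<comment> \<open>mu = - Laplace phi + f'(phi) a.e.\<close>
     (AE t in lebesgue_on {0..}. AE x in lebesgue_on \<Omega>.
        mu t x = - lap (Hphi t x) + deriv F (phi t x) - \<theta>0 * phi t x) \<and>
     \<comment> \<open>homogeneous Neumann condition for the H^2 function phi(t) (Green's formula)\<close>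
     (AE t in lebesgue_on {0..}. \<forall>v Gv. weak_grad \<Omega> v Gv \<longrightarrow>
        (LINT x|lebesgue_on \<Omega>. lap (Hphi t x) * v x) = - (LINT x|lebesgue_on \<Omega>. Gphi t x \<bullet> Gv x)) \<and>
     \<comment> \<open>energy inequalities, for all t and s = 0 and a.a. s in [0,t]\<close>
     (\<forall>t\<ge>0. let
        KE = (\<lambda>s. (1/2) * (LINT x|lebesgue_on \<Omega>. rho \<rho>1 \<rho>2 (phi t x) * (norm (u t x))\<^sup>2)
                 + stint \<Omega> s t (\<lambda>\<tau> x. \<nu> (phi \<tau> x) * frob (symgrad (Gu \<tau> x)) (symgrad (Gu \<tau> x)))
               \<le> (1/2) * (LINT x|lebesgue_on \<Omega>. rho \<rho>1 \<rho>2 (phi s x) * (norm (u s x))\<^sup>2)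
                 - stint \<Omega> s t (\<lambda>\<tau> x. (u \<tau> x \<bullet> Gmu \<tau> x) * phi \<tau> x));
        EE = (\<lambda>s. Eng \<Omega> F \<theta>0 (phi t) (Gphi t)
                 + ereal (stint \<Omega> s t (\<lambda>\<tau> x. m (phi \<tau> x) * (norm (Gmu \<tau> x))\<^sup>2))
               \<le> Eng \<Omega> F \<theta>0 (phi s) (Gphi s)
                 + ereal (stint \<Omega> s t (\<lambda>\<tau> x. (u \<tau> x \<bullet> Gmu \<tau> x) * phi \<tau> x)))
      in (KE 0 \<and> EE 0) \<and> (AE s in lebesgue_on {0..t}. KE s \<and> EE s)))"

end

theory Submission
  imports Defs
begin

(* The argument rests on the kinetic-energy inequality.  Since u is in L^2(0,oo; L^2), the tail
   T(s) = int_s^oo |u|^2 tends to 0, so every late unit interval [t-1,t] contains a time s at which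
   |u(s)| is small and the kinetic-energy inequality between s and t holds.  On [s,t] the kinetic
   energy (1/2) int rho(phi)|u|^2 can only grow through the exchange term int int (u . grad mu) phi;
   as |phi| <= 1, Young's inequality bounds it by a T(s) + C/(4a) for every a > 0, where C bounds
   mu in L^2(s,s+1; H^1).  Since rho lies between min rho_i and max rho_i, |u(t)| -> 0.
   The bound |phi(t)| <= 1 for every t comes from the finiteness of the total energy (f = +oo
   outside [-1,1]). *)

lemma ennreal_norm_integral_le_nn_integral:
  fixes f :: "'a \<Rightarrow> real"
  shows "ennreal (norm (integral\<^sup>L M f)) \<le> (\<integral>\<^sup>+ x. norm (f x) \<partial>M)"
  using integral_norm_bound_ennreal[of M f]
  by (cases "integrable M f") (auto simp: not_integrable_integral_eq)

lemma nn_integral_tail_tendsto_zero: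
  fixes g :: "'a \<Rightarrow> ennreal" and \<tau> :: "'a \<Rightarrow> real"
  assumes [measurable]: "g \<in> borel_measurable M" "\<tau> \<in> borel_measurable M"
    and finite: "integral\<^sup>N M g < \<infinity>"
  shows "((\<lambda>s. \<integral>\<^sup>+ z. g z * indicator {s..} (\<tau> z) \<partial>M) \<longlongrightarrow> 0) at_top"
proof (rule order_tendstoI)
  fix y :: ennreal assume "0 < y"
  define f where "f n z = g z * indicator {real n..} (\<tau> z)" for n :: nat and z
  have "decseq f"
    by (intro decseq_SucI le_funI) (auto simp: f_def indicator_def)
  moreover have "f n \<in> borel_measurable M" for n
    unfolding f_def by measurable
  moreover have "integral\<^sup>N M (f n) < \<infinity>" for n
    using finite nn_integral_mono[of M "f n" g] by (fastforce simp: f_def indicator_def)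
  ultimately have "(INF n. integral\<^sup>N M (f n)) = integral\<^sup>N M (\<lambda>z. INF n. f n z)"
    by (rule nn_integral_monotone_convergence_INF_decseq[symmetric])
  also have "(\<lambda>z. INF n. f n z) = (\<lambda>z. 0)"
  proof
    fix z
    have "(INF n. f n z) \<le> f (nat \<lceil>\<tau> z\<rceil> + 1) z"
      by (rule INF_lower) simp
    also have "\<dots> = 0"
      unfolding f_def by (auto simp: indicator_def) linarith
    finally show "(INF n. f n z) = 0" by simp
  qed
  finally have "(INF n. integral\<^sup>N M (f n)) < y"
    using \<open>0 < y\<close> by simp
  then obtain n where n: "integral\<^sup>N M (f n) < y"
    by (auto simp: INF_less_iff)
  have "(\<integral>\<^sup>+ z. g z * indicator {s..} (\<tau> z) \<partial>M) < y" if "real n \<le> s" for s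
    using that n nn_integral_mono[of M "\<lambda>z. g z * indicator {s..} (\<tau> z)" "f n"]
    by (fastforce simp: f_def indicator_def)
  then show "\<forall>\<^sub>F s in at_top. (\<integral>\<^sup>+ z. g z * indicator {s..} (\<tau> z) \<partial>M) < y"
    by (auto simp: eventually_at_top_linorder)
qed simp

lemma sigma_finite_lebesgue_on_lmeasurable:
  "\<Omega> \<in> lmeasurable \<Longrightarrow> sigma_finite_measure (lebesgue_on \<Omega>)"
  using finite_measure_lebesgue_on by (auto simp: finite_measure_def)

lemma nn_integral_pair_indicator_fst:
  fixes F :: "real \<times> 'b \<Rightarrow> ennreal"
  assumes N: "sigma_finite_measure N" and "S \<subseteq> T" "S \<in> sets lebesgue" "T \<in> sets lebesgue"
    and F[measurable]: "F \<in> borel_measurable (lebesgue_on T \<Otimes>\<^sub>M N)"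
  shows "(\<integral>\<^sup>+ z. F z * indicator S (fst z) \<partial>(lebesgue_on T \<Otimes>\<^sub>M N))
       = (\<integral>\<^sup>+ \<tau>. (\<integral>\<^sup>+ x. F (\<tau>, x) \<partial>N) \<partial>lebesgue_on S)"
proof -
  have "indicator S \<in> borel_measurable (lebesgue_on T)"
    using \<open>S \<in> sets lebesgue\<close> by (intro measurable_restrict_space1 borel_measurable_indicator)
  then have "(\<lambda>z. F z * indicator S (fst z)) \<in> borel_measurable (lebesgue_on T \<Otimes>\<^sub>M N)"
    by measurable
  from sigma_finite_measure.nn_integral_fst[OF N this]
  have "(\<integral>\<^sup>+ z. F z * indicator S (fst z) \<partial>(lebesgue_on T \<Otimes>\<^sub>M N))
      = (\<integral>\<^sup>+ \<tau>. (\<integral>\<^sup>+ x. F (\<tau>, x) * indicator S \<tau> \<partial>N) \<partial>lebesgue_on T)"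
    by simp
  also have "\<dots> = (\<integral>\<^sup>+ \<tau>. (\<integral>\<^sup>+ x. F (\<tau>, x) \<partial>N) * indicator S \<tau> \<partial>lebesgue_on T)"
    by (intro nn_integral_cong) (auto simp: indicator_def)
  also have "\<dots> = (\<integral>\<^sup>+ \<tau>. (\<integral>\<^sup>+ x. F (\<tau>, x) \<partial>N) * indicator S \<tau> \<partial>lebesgue)"
    using assms by (subst nn_integral_restrict_space) (auto intro!: nn_integral_cong simp: indicator_def)
  also have "\<dots> = (\<integral>\<^sup>+ \<tau>. (\<integral>\<^sup>+ x. F (\<tau>, x) \<partial>N) \<partial>lebesgue_on S)"
    using assms by (subst nn_integral_restrict_space) auto
  finally show ?thesis .
qed

lemma AE_lebesgue_on_subset:
  assumes "AE x in lebesgue_on S. P x" "T \<subseteq> S" "S \<in> sets lebesgue" "T \<in> sets lebesgue"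
  shows "AE x in lebesgue_on T. P x"
  using assms by (auto simp: AE_restrict_space_iff elim!: eventually_mono)

lemma AE_exists_below_average:
  assumes "a < b" "AE s in lebesgue_on {a..b}. P s"
    and small: "(\<integral>\<^sup>+ s. ennreal (U s) \<partial>lebesgue_on {a..b}) < ennreal (\<delta> * (b - a))"
  shows "\<exists>s\<in>{a..b}. P s \<and> U s < \<delta>"
proof (rule ccontr)
  assume none: "\<not> ?thesis"
  have "AE s in lebesgue_on {a..b}. ennreal \<delta> \<le> ennreal (U s)"
    using AE_space assms(2)
  proof eventually_elim
    case (elim s)
    with none show ?case by (auto intro!: ennreal_leI simp: not_less)
  qed
  then have "(\<integral>\<^sup>+ s. ennreal \<delta> \<partial>lebesgue_on {a..b}) \<le> (\<integral>\<^sup>+ s. ennreal (U s) \<partial>lebesgue_on {a..b})"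
    by (rule nn_integral_mono_AE)
  moreover have "ennreal (\<delta> * (b - a)) \<le> (\<integral>\<^sup>+ s. ennreal \<delta> \<partial>lebesgue_on {a..b})"
  proof (cases "0 \<le> \<delta>")
    case True
    with \<open>a < b\<close> show ?thesis by (simp add: emeasure_restrict_space ennreal_mult)
  qed (use \<open>a < b\<close> in \<open>simp add: ennreal_neg mult_nonpos_nonneg\<close>)
  ultimately show False using small by simp
qed

lemma mult_le_weighted_squares:
  fixes x y a :: real
  assumes "0 < a"
  shows "x * y \<le> a * x\<^sup>2 + y\<^sup>2 / (4 * a)"
proof -
  have "0 \<le> (2 * a * x - y)\<^sup>2" by simp
  then have "4 * a * (x * y) \<le> 4 * a * (a * x\<^sup>2 + y\<^sup>2 / (4 * a))"
    using assms by (simp add: power2_eq_square algebra_simps)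
  then show ?thesis using assms by simp
qed

section \<open>Decay from a local energy inequality\<close>

(* U t plays the role of |u(t)|^2, K of the kinetic energy, X s t of the exchange term between
   s and t, and T s of the tail int_s^oo U. *)
locale local_energy_inequality =
  fixes U K :: "real \<Rightarrow> real" and X :: "real \<Rightarrow> real \<Rightarrow> real" and T :: "real \<Rightarrow> ennreal"
    and c c' C :: real
  assumes c_pos: "0 < c" and c'_nonneg: "0 \<le> c'" and C_nonneg: "0 \<le> C"
    and U_nonneg: "\<And>t. 0 \<le> U t"
    and K_lower: "\<And>t. 0 \<le> t \<Longrightarrow> c * U t \<le> K t"
    and K_upper: "\<And>t. 0 \<le> t \<Longrightarrow> K t \<le> c' * U t"
    and energy: "\<And>t. 0 \<le> t \<Longrightarrow> AE s in lebesgue_on {0..t}. K t \<le> K s + X s t"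
    and exchange: "\<And>s t a. 0 \<le> s \<Longrightarrow> s \<le> t \<Longrightarrow> t \<le> s + 1 \<Longrightarrow> 0 < a \<Longrightarrow>
                     ennreal \<bar>X s t\<bar> \<le> ennreal a * T s + ennreal (C / a)"
    and tail: "(T \<longlongrightarrow> 0) at_top"
    and average: "\<And>t. 1 \<le> t \<Longrightarrow> (\<integral>\<^sup>+ s. ennreal (U s) \<partial>lebesgue_on {t - 1..t}) \<le> T (t - 1)"
begin

lemma good_time_exists:
  assumes "1 \<le> t" and "T (t - 1) < ennreal \<delta>"
  shows "\<exists>s\<in>{t - 1..t}. K t \<le> K s + X s t \<and> U s < \<delta>"
proof (rule AE_exists_below_average)
  show "AE s in lebesgue_on {t - 1..t}. K t \<le> K s + X s t"
    by (rule AE_lebesgue_on_subset[OF energy]) (use \<open>1 \<le> t\<close> in auto)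
  show "(\<integral>\<^sup>+ s. ennreal (U s) \<partial>lebesgue_on {t - 1..t}) < ennreal (\<delta> * (t - (t - 1)))"
    using average[OF \<open>1 \<le> t\<close>] assms(2) by simp
qed simp

lemma energy_bound_small_tail:
  assumes "1 \<le> t" "0 < a" "0 < \<delta>" and small: "\<And>s. t - 1 \<le> s \<Longrightarrow> T s < ennreal \<delta>"
  shows "c * U t \<le> (c' + a) * \<delta> + C / a"
proof -
  obtain s where s: "s \<in> {t - 1..t}" "K t \<le> K s + X s t" "U s < \<delta>"
    using good_time_exists[OF \<open>1 \<le> t\<close> small] by auto
  have "ennreal \<bar>X s t\<bar> \<le> ennreal a * T s + ennreal (C / a)"
    using s(1) assms by (intro exchange) auto
  also have "\<dots> \<le> ennreal a * ennreal \<delta> + ennreal (C / a)"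
    using small[of s] s(1) by (intro add_mono mult_left_mono) auto
  also have "\<dots> = ennreal (a * \<delta> + C / a)"
    using assms C_nonneg by (simp add: ennreal_mult ennreal_plus)
  finally have X_bound: "\<bar>X s t\<bar> \<le> a * \<delta> + C / a"
    using assms C_nonneg by (subst (asm) ennreal_le_iff) auto
  have "c * U t \<le> K s + X s t"
    using K_lower[of t] s(2) \<open>1 \<le> t\<close> by simp
  also have "\<dots> \<le> c' * \<delta> + (a * \<delta> + C / a)"
    using K_upper[of s] s \<open>1 \<le> t\<close> X_bound c'_nonneg
    by (intro add_mono order_trans[OF _ mult_left_mono[of "U s" \<delta>]]) auto
  finally show ?thesis
    by (simp add: algebra_simps)
qed

lemma tendsto_zero: "(U \<longlongrightarrow> 0) at_top"
proof (rule order_tendstoI)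
  fix e :: real assume "0 < e"
  define E where "E = c * e"
  define a where "a = 3 * (C + 1) / E"
  define \<delta> where "\<delta> = E / 3 / (c' + a)"
  have "0 < E"
    using c_pos \<open>0 < e\<close> by (simp add: E_def)
  then have "0 < a"
    using C_nonneg by (simp add: a_def)
  then have "0 < c' + a"
    using c'_nonneg by simp
  then have "0 < \<delta>" and \<delta>: "(c' + a) * \<delta> = E / 3"
    using \<open>0 < E\<close> unfolding \<delta>_def
    by (simp, metis times_divide_eq_right nonzero_mult_div_cancel_left less_irrefl)
  have "C / a < E / 3"
    using \<open>0 < E\<close> C_nonneg by (simp add: a_def field_simps)
  obtain S where S: "\<And>s. S \<le> s \<Longrightarrow> T s < ennreal \<delta>"
    using order_tendstoD(2)[OF tail, of "ennreal \<delta>"] \<open>0 < \<delta>\<close>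
    by (auto simp: eventually_at_top_linorder)
  have "U t < e" if "max 1 (S + 1) \<le> t" for t
  proof -
    have "c * U t \<le> (c' + a) * \<delta> + C / a"
      using that S \<open>0 < a\<close> \<open>0 < \<delta>\<close> by (intro energy_bound_small_tail) auto
    also have "\<dots> < c * e"
      using \<delta> \<open>C / a < E / 3\<close> \<open>0 < E\<close> unfolding E_def by linarith
    finally show ?thesis
      using c_pos by simp
  qed
  then show "\<forall>\<^sub>F t in at_top. U t < e"
    unfolding eventually_at_top_linorder by blast
next
  fix e :: real assume "e < 0"
  then have "e < U t" for t
    using U_nonneg[of t] by linarith
  then show "\<forall>\<^sub>F t in at_top. e < U t"
    by (simp add: always_eventually)
qed

end

lemma rho_bounds:
  assumes "\<bar>s\<bar> \<le> 1" "0 < \<rho>1" "0 < \<rho>2"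
  shows "min \<rho>1 \<rho>2 \<le> rho \<rho>1 \<rho>2 s" "rho \<rho>1 \<rho>2 s \<le> max \<rho>1 \<rho>2"
proof -
  define w where "w = (1 + s) / 2"
  have w: "0 \<le> w" "w \<le> 1" using assms by (auto simp: w_def)
  have r: "rho \<rho>1 \<rho>2 s = w * \<rho>1 + (1 - w) * \<rho>2" by (simp add: rho_def w_def field_simps)
  have "w * min \<rho>1 \<rho>2 \<le> w * \<rho>1" "(1 - w) * min \<rho>1 \<rho>2 \<le> (1 - w) * \<rho>2"
    using w by (auto intro!: mult_left_mono)
  then show "min \<rho>1 \<rho>2 \<le> rho \<rho>1 \<rho>2 s" unfolding r by (simp add: algebra_simps)
  have "w * \<rho>1 \<le> w * max \<rho>1 \<rho>2" "(1 - w) * \<rho>2 \<le> (1 - w) * max \<rho>1 \<rho>2"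
    using w by (auto intro!: mult_left_mono)
  then show "rho \<rho>1 \<rho>2 s \<le> max \<rho>1 \<rho>2" unfolding r by (simp add: algebra_simps)
qed

lemma integral_rho_weighted_bounds:
  fixes \<phi> w :: "'a \<Rightarrow> real"
  assumes "0 < \<rho>1" "0 < \<rho>2" and \<phi>: "\<phi> \<in> borel_measurable M" "AE x in M. \<bar>\<phi> x\<bar> \<le> 1"
    and w: "integrable M w" "\<And>x. 0 \<le> w x"
  shows "min \<rho>1 \<rho>2 * integral\<^sup>L M w \<le> (\<integral>x. rho \<rho>1 \<rho>2 (\<phi> x) * w x \<partial>M)"
    and "(\<integral>x. rho \<rho>1 \<rho>2 (\<phi> x) * w x \<partial>M) \<le> max \<rho>1 \<rho>2 * integral\<^sup>L M w"
proof -
  have bounds: "AE x in M. min \<rho>1 \<rho>2 * w x \<le> rho \<rho>1 \<rho>2 (\<phi> x) * w x \<and>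
                           rho \<rho>1 \<rho>2 (\<phi> x) * w x \<le> max \<rho>1 \<rho>2 * w x"
    using \<phi>(2) by eventually_elim (use assms rho_bounds in \<open>auto intro!: mult_right_mono\<close>)
  have int: "integrable M (\<lambda>x. rho \<rho>1 \<rho>2 (\<phi> x) * w x)"
  proof (rule Bochner_Integration.integrable_bound)
    show "integrable M (\<lambda>x. max \<rho>1 \<rho>2 * w x)" using w(1) by simp
    show "(\<lambda>x. rho \<rho>1 \<rho>2 (\<phi> x) * w x) \<in> borel_measurable M"
      using \<phi>(1) w(1) unfolding rho_def by measurable
    show "AE x in M. norm (rho \<rho>1 \<rho>2 (\<phi> x) * w x) \<le> norm (max \<rho>1 \<rho>2 * w x)"
      using bounds
    proof eventually_elim
      case (elim x)
      moreover have "0 \<le> min \<rho>1 \<rho>2 * w x" using assms w(2) by simp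
      ultimately show ?case by simp
    qed
  qed
  have "AE x in M. min \<rho>1 \<rho>2 * w x \<le> rho \<rho>1 \<rho>2 (\<phi> x) * w x"
    using bounds by (rule eventually_mono) simp
  from integral_mono_AE[OF integrable_mult_right[OF w(1)] int this]
  show "min \<rho>1 \<rho>2 * integral\<^sup>L M w \<le> (\<integral>x. rho \<rho>1 \<rho>2 (\<phi> x) * w x \<partial>M)"
    by simp
  have "AE x in M. rho \<rho>1 \<rho>2 (\<phi> x) * w x \<le> max \<rho>1 \<rho>2 * w x"
    using bounds by (rule eventually_mono) simp
  from integral_mono_AE[OF int integrable_mult_right[OF w(1)] this]
  show "(\<integral>x. rho \<rho>1 \<rho>2 (\<phi> x) * w x \<partial>M) \<le> max \<rho>1 \<rho>2 * integral\<^sup>L M w"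
    by simp
qed

lemma measurable_fst_ST: "fst \<in> borel_measurable (ST \<Omega> {0..})"
  unfolding ST_def by (intro measurable_fst'' measurable_restrict_space1 measurable_completion) simp

lemma frob_self_nonneg: "0 \<le> frob A A"
  unfolding frob_def by (intro sum_nonneg) simp

lemma stint_nonneg: "(\<And>\<tau> x. 0 \<le> h \<tau> x) \<Longrightarrow> 0 \<le> stint \<Omega> a b h"
  unfolding stint_def by (intro integral_nonneg_AE AE_I2) auto

lemma AE_abs_le_1_of_Eng_le:
  assumes "Eng \<Omega> F \<theta>0 v G + ereal r \<le> Eng \<Omega> F \<theta>0 w H + ereal r'"
    and "AE x in lebesgue_on \<Omega>. \<bar>w x\<bar> \<le> 1"
  shows "AE x in lebesgue_on \<Omega>. \<bar>v x\<bar> \<le> 1"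
  using assms by (auto simp: Eng_def split: if_splits)

lemma ennreal_abs_stint_le:
  fixes h :: "real \<Rightarrow> real^'n \<Rightarrow> real"
  assumes \<Omega>: "\<Omega> \<in> lmeasurable" and h: "(\<lambda>z. h (fst z) (snd z)) \<in> borel_measurable (ST \<Omega> {0..})"
    and "0 \<le> a"
  shows "ennreal \<bar>stint \<Omega> a b h\<bar>
       \<le> (\<integral>\<^sup>+ z. ennreal \<bar>h (fst z) (snd z)\<bar> * indicator {a..b} (fst z) \<partial>ST \<Omega> {0..})"
proof -
  have "ennreal \<bar>stint \<Omega> a b h\<bar>
      \<le> (\<integral>\<^sup>+ \<tau>. ennreal \<bar>LINT x|lebesgue_on \<Omega>. h \<tau> x\<bar> \<partial>lebesgue_on {a..b})"
    using ennreal_norm_integral_le_nn_integral by (simp add: stint_def)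
  also have "\<dots> \<le> (\<integral>\<^sup>+ \<tau>. (\<integral>\<^sup>+ x. ennreal \<bar>h \<tau> x\<bar> \<partial>lebesgue_on \<Omega>) \<partial>lebesgue_on {a..b})"
    using ennreal_norm_integral_le_nn_integral by (intro nn_integral_mono) simp
  also have "\<dots> = (\<integral>\<^sup>+ z. ennreal \<bar>h (fst z) (snd z)\<bar> * indicator {a..b} (fst z) \<partial>ST \<Omega> {0..})"
    using nn_integral_pair_indicator_fst[OF sigma_finite_lebesgue_on_lmeasurable[OF \<Omega>],
        of "{a..b}" "{0..}" "\<lambda>z. ennreal \<bar>h (fst z) (snd z)\<bar>"] h \<open>0 \<le> a\<close>
    by (simp add: ST_def)
  finally show ?thesis .
qed

lemma exchange_integrand_bound:
  fixes v g :: "'a::real_inner"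
  assumes "\<bar>p\<bar> \<le> 1" "0 < a"
  shows "\<bar>(v \<bullet> g) * p\<bar> \<le> a * (norm v)\<^sup>2 + 1 / (4 * a) * (m\<^sup>2 + (norm g)\<^sup>2)"
proof -
  have "\<bar>(v \<bullet> g) * p\<bar> \<le> \<bar>v \<bullet> g\<bar>"
    using assms(1) by (simp add: abs_mult mult_left_le)
  also have "\<dots> \<le> norm v * norm g"
    by (rule Cauchy_Schwarz_ineq2)
  also have "\<dots> \<le> a * (norm v)\<^sup>2 + (norm g)\<^sup>2 / (4 * a)"
    by (rule mult_le_weighted_squares[OF \<open>0 < a\<close>])
  also have "\<dots> \<le> a * (norm v)\<^sup>2 + 1 / (4 * a) * (m\<^sup>2 + (norm g)\<^sup>2)"
    using \<open>0 < a\<close> by (simp add: divide_right_mono)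
  finally show ?thesis .
qed

lemma nn_integral_short_slab_le:
  fixes f :: "real \<times> (real^'n) \<Rightarrow> real"
  assumes \<Omega>: "\<Omega> \<in> lmeasurable" and f: "f \<in> borel_measurable (ST \<Omega> {0..})" "integrable (ST \<Omega> {s..s+1}) f"
    and "\<And>z. 0 \<le> f z" "0 \<le> s" "s \<le> t" "t \<le> s + 1"
  shows "(\<integral>\<^sup>+ z. ennreal (f z) * indicator {s..t} (fst z) \<partial>ST \<Omega> {0..})
       \<le> ennreal (integral\<^sup>L (ST \<Omega> {s..s+1}) f)"
proof -
  note \<sigma> = sigma_finite_lebesgue_on_lmeasurable[OF \<Omega>]
  have "(\<integral>\<^sup>+ z. ennreal (f z) * indicator {s..t} (fst z) \<partial>ST \<Omega> {0..})
      = (\<integral>\<^sup>+ \<tau>. (\<integral>\<^sup>+ x. ennreal (f (\<tau>, x)) \<partial>lebesgue_on \<Omega>) \<partial>lebesgue_on {s..t})"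
    using assms f(1) unfolding ST_def by (intro nn_integral_pair_indicator_fst[OF \<sigma>]) auto
  also have "\<dots> = (\<integral>\<^sup>+ z. ennreal (f z) * indicator {s..t} (fst z) \<partial>ST \<Omega> {s..s+1})"
    using assms borel_measurable_integrable[OF f(2)] unfolding ST_def
    by (intro nn_integral_pair_indicator_fst[OF \<sigma>, symmetric]) auto
  also have "\<dots> \<le> (\<integral>\<^sup>+ z. ennreal (f z) \<partial>ST \<Omega> {s..s+1})"
    by (intro nn_integral_mono) (auto simp: indicator_def)
  also have "\<dots> = ennreal (integral\<^sup>L (ST \<Omega> {s..s+1}) f)"
    using f(2) assms by (intro nn_integral_eq_integral) auto
  finally show ?thesis .
qed

lemma exchange_term_bound:
  fixes u Gmu :: "real \<Rightarrow> real^'n \<Rightarrow> real^'n" and phi mu :: "real \<Rightarrow> real^'n \<Rightarrow> real"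
  assumes \<Omega>: "\<Omega> \<in> lmeasurable"
    and meas: "(\<lambda>(t,x). u t x) \<in> borel_measurable (ST \<Omega> {0..})"
      "(\<lambda>(t,x). phi t x) \<in> borel_measurable (ST \<Omega> {0..})"
      "(\<lambda>(t,x). mu t x) \<in> borel_measurable (ST \<Omega> {0..})"
      "(\<lambda>(t,x). Gmu t x) \<in> borel_measurable (ST \<Omega> {0..})"
    and phi_bound: "AE z in ST \<Omega> {0..}. \<bar>phi (fst z) (snd z)\<bar> < 1"
    and mu_bound: "integrable (ST \<Omega> {s..s+1}) (\<lambda>(t,x). (mu t x)\<^sup>2 + (norm (Gmu t x))\<^sup>2)"
      "integral\<^sup>L (ST \<Omega> {s..s+1}) (\<lambda>(t,x). (mu t x)\<^sup>2 + (norm (Gmu t x))\<^sup>2) \<le> C"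
    and "0 \<le> s" "s \<le> t" "t \<le> s + 1" "0 < a"
  shows "ennreal \<bar>stint \<Omega> s t (\<lambda>\<tau> x. (u \<tau> x \<bullet> Gmu \<tau> x) * phi \<tau> x)\<bar>
       \<le> ennreal a * (\<integral>\<^sup>+ z. ennreal ((norm (u (fst z) (snd z)))\<^sup>2) * indicator {s..} (fst z) \<partial>ST \<Omega> {0..})
         + ennreal (C / (4 * a))"
proof -
  define P where "P = ST \<Omega> {0..}"
  define A where "A z = ennreal ((norm (u (fst z) (snd z)))\<^sup>2)" for z
  define B where "B z = (mu (fst z) (snd z))\<^sup>2 + (norm (Gmu (fst z) (snd z)))\<^sup>2" for z
  define I where "I z = (indicator {s..t} (fst z) :: ennreal)" for z :: "real \<times> (real^'n)"
  have [measurable]: "(\<lambda>z. u (fst z) (snd z)) \<in> borel_measurable P"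
    "(\<lambda>z. phi (fst z) (snd z)) \<in> borel_measurable P" "(\<lambda>z. mu (fst z) (snd z)) \<in> borel_measurable P"
    "(\<lambda>z. Gmu (fst z) (snd z)) \<in> borel_measurable P"
    using meas by (simp_all add: P_def split_beta')
  note measurable_fst_ST[of \<Omega>, folded P_def, measurable]
  have B_meas: "B \<in> borel_measurable P"
    unfolding B_def by measurable
  have B_nonneg: "0 \<le> B z" for z
    by (simp add: B_def)
  have B_slab: "integrable (ST \<Omega> {s..s+1}) B" "integral\<^sup>L (ST \<Omega> {s..s+1}) B \<le> C"
    using mu_bound unfolding B_def split_beta' by auto
  have young: "ennreal \<bar>(u (fst z) (snd z) \<bullet> Gmu (fst z) (snd z)) * phi (fst z) (snd z)\<bar>
      \<le> ennreal a * A z + ennreal (1 / (4 * a)) * ennreal (B z)"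
    if "\<bar>phi (fst z) (snd z)\<bar> < 1" for z
    using exchange_integrand_bound[of "phi (fst z) (snd z)" a "u (fst z) (snd z)" "Gmu (fst z) (snd z)"
        "mu (fst z) (snd z)"] that \<open>0 < a\<close> unfolding A_def B_def
    by (simp add: ennreal_mult'[symmetric] ennreal_plus[symmetric] ennreal_leI del: ennreal_plus)
  have "ennreal \<bar>stint \<Omega> s t (\<lambda>\<tau> x. (u \<tau> x \<bullet> Gmu \<tau> x) * phi \<tau> x)\<bar>
      \<le> (\<integral>\<^sup>+ z. ennreal \<bar>(u (fst z) (snd z) \<bullet> Gmu (fst z) (snd z)) * phi (fst z) (snd z)\<bar> * I z \<partial>P)"
    unfolding P_def I_def using \<open>0 \<le> s\<close>
    by (intro ennreal_abs_stint_le \<Omega>) (simp add: P_def[symmetric])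
  also have "\<dots> \<le> (\<integral>\<^sup>+ z. ennreal a * (A z * I z) + ennreal (1 / (4 * a)) * (ennreal (B z) * I z) \<partial>P)"
    using phi_bound unfolding P_def[symmetric]
    by (intro nn_integral_mono_AE) (auto elim!: eventually_mono dest!: young simp: I_def indicator_def)
  also have "\<dots> = ennreal a * (\<integral>\<^sup>+ z. A z * I z \<partial>P) + ennreal (1 / (4 * a)) * (\<integral>\<^sup>+ z. ennreal (B z) * I z \<partial>P)"
    using B_meas by (simp add: nn_integral_add nn_integral_cmult A_def I_def P_def[symmetric])
  also have "\<dots> \<le> ennreal a * (\<integral>\<^sup>+ z. A z * indicator {s..} (fst z) \<partial>P) + ennreal (1 / (4 * a)) * ennreal C"
  proof (intro add_mono mult_left_mono)
    show "(\<integral>\<^sup>+ z. A z * I z \<partial>P) \<le> (\<integral>\<^sup>+ z. A z * indicator {s..} (fst z) \<partial>P)"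
      by (intro nn_integral_mono) (auto simp: I_def indicator_def)
    have "(\<integral>\<^sup>+ z. ennreal (B z) * I z \<partial>P) \<le> ennreal (integral\<^sup>L (ST \<Omega> {s..s+1}) B)"
      unfolding I_def P_def using assms B_meas B_slab(1)
      by (intro nn_integral_short_slab_le) (auto simp: B_nonneg P_def)
    also have "\<dots> \<le> ennreal C"
      using B_slab(2) by (rule ennreal_leI)
    finally show "(\<integral>\<^sup>+ z. ennreal (B z) * I z \<partial>P) \<le> ennreal C" .
  qed auto
  also have "ennreal (1 / (4 * a)) * ennreal C = ennreal (C / (4 * a))"
    using \<open>0 < a\<close> by (simp add: ennreal_mult'[symmetric])
  finally show ?thesis unfolding A_def P_def .
qed

lemma space_time_tail_tendsto_zero:
  fixes u :: "real \<Rightarrow> real^'n \<Rightarrow> real^'n" and Gu :: "real \<Rightarrow> real^'n \<Rightarrow> real^'n^'n"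
  assumes "(\<lambda>(t,x). u t x) \<in> borel_measurable (ST \<Omega> {0..})"
    and "integrable (ST \<Omega> {0..}) (\<lambda>(t,x). (norm (u t x))\<^sup>2 + (norm (Gu t x))\<^sup>2)"
  shows "((\<lambda>s. \<integral>\<^sup>+ z. ennreal ((norm (u (fst z) (snd z)))\<^sup>2) * indicator {s..} (fst z) \<partial>ST \<Omega> {0..})
           \<longlongrightarrow> 0) at_top"
proof (rule nn_integral_tail_tendsto_zero)
  show "(\<lambda>z. ennreal ((norm (u (fst z) (snd z)))\<^sup>2)) \<in> borel_measurable (ST \<Omega> {0..})"
    using assms(1) by (simp add: split_beta')
  show "fst \<in> borel_measurable (ST \<Omega> {0..})"
    by (rule measurable_fst_ST)
  have "(\<integral>\<^sup>+ z. ennreal ((norm (u (fst z) (snd z)))\<^sup>2) \<partial>ST \<Omega> {0..})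
      \<le> (\<integral>\<^sup>+ z. ennreal (norm ((\<lambda>(t,x). (norm (u t x))\<^sup>2 + (norm (Gu t x))\<^sup>2) z)) \<partial>ST \<Omega> {0..})"
    by (intro nn_integral_mono) (auto simp: split_beta')
  also have "\<dots> < \<infinity>"
    using assms(2) by (simp add: integrable_iff_bounded)
  finally show "(\<integral>\<^sup>+ z. ennreal ((norm (u (fst z) (snd z)))\<^sup>2) \<partial>ST \<Omega> {0..}) < \<infinity>" .
qed

lemma nn_integral_L2_norm_le_tail:
  fixes u :: "real \<Rightarrow> real^'n \<Rightarrow> real^'n"
  assumes \<Omega>: "\<Omega> \<in> lmeasurable" and meas: "(\<lambda>(t,x). u t x) \<in> borel_measurable (ST \<Omega> {0..})"
    and int: "\<And>\<tau>. 0 \<le> \<tau> \<Longrightarrow> integrable (lebesgue_on \<Omega>) (\<lambda>x. (norm (u \<tau> x))\<^sup>2)"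
    and "0 \<le> a"
  shows "(\<integral>\<^sup>+ \<tau>. ennreal (LINT x|lebesgue_on \<Omega>. (norm (u \<tau> x))\<^sup>2) \<partial>lebesgue_on {a..b})
       \<le> (\<integral>\<^sup>+ z. ennreal ((norm (u (fst z) (snd z)))\<^sup>2) * indicator {a..} (fst z) \<partial>ST \<Omega> {0..})"
proof -
  have "(\<integral>\<^sup>+ \<tau>. ennreal (LINT x|lebesgue_on \<Omega>. (norm (u \<tau> x))\<^sup>2) \<partial>lebesgue_on {a..b})
      = (\<integral>\<^sup>+ \<tau>. (\<integral>\<^sup>+ x. ennreal ((norm (u \<tau> x))\<^sup>2) \<partial>lebesgue_on \<Omega>) \<partial>lebesgue_on {a..b})"
    using int \<open>0 \<le> a\<close> by (intro nn_integral_cong nn_integral_eq_integral[symmetric]) auto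
  also have "\<dots> = (\<integral>\<^sup>+ z. ennreal ((norm (u (fst z) (snd z)))\<^sup>2) * indicator {a..b} (fst z) \<partial>ST \<Omega> {0..})"
    using nn_integral_pair_indicator_fst[OF sigma_finite_lebesgue_on_lmeasurable[OF \<Omega>],
        of "{a..b}" "{0..}" "\<lambda>z. ennreal ((norm (u (fst z) (snd z)))\<^sup>2)"] meas \<open>0 \<le> a\<close>
    by (simp add: ST_def split_beta')
  also have "\<dots> \<le> (\<integral>\<^sup>+ z. ennreal ((norm (u (fst z) (snd z)))\<^sup>2) * indicator {a..} (fst z) \<partial>ST \<Omega> {0..})"
    by (intro nn_integral_mono) (auto simp: indicator_def)
  finally show ?thesis .
qed

lemma global_weak_solution_facts:
  fixes \<Omega> :: "(real^'n) set"
  assumes "global_weak_solution \<Omega> m F \<theta>0 \<nu> \<rho>1 \<rho>2 u0 phi0 u phi mu"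
  obtains Gu :: "real \<Rightarrow> real^'n \<Rightarrow> real^'n^'n" and Gphi Gmu C where
    "\<And>t. 0 \<le> t \<Longrightarrow> AE s in lebesgue_on {0..t}.
        (1/2) * (LINT x|lebesgue_on \<Omega>. rho \<rho>1 \<rho>2 (phi t x) * (norm (u t x))\<^sup>2)
          + stint \<Omega> s t (\<lambda>\<tau> x. \<nu> (phi \<tau> x) * frob (symgrad (Gu \<tau> x)) (symgrad (Gu \<tau> x)))
        \<le> (1/2) * (LINT x|lebesgue_on \<Omega>. rho \<rho>1 \<rho>2 (phi s x) * (norm (u s x))\<^sup>2)
          - stint \<Omega> s t (\<lambda>\<tau> x. (u \<tau> x \<bullet> Gmu \<tau> x) * phi \<tau> x)"
    "\<And>t. 0 \<le> t \<Longrightarrow> Eng \<Omega> F \<theta>0 (phi t) (Gphi t)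
          + ereal (stint \<Omega> 0 t (\<lambda>\<tau> x. m (phi \<tau> x) * (norm (Gmu \<tau> x))\<^sup>2))
        \<le> Eng \<Omega> F \<theta>0 (phi 0) (Gphi 0) + ereal (stint \<Omega> 0 t (\<lambda>\<tau> x. (u \<tau> x \<bullet> Gmu \<tau> x) * phi \<tau> x))"
    "\<And>\<tau>. 0 \<le> \<tau> \<Longrightarrow> integral\<^sup>L (ST \<Omega> {\<tau>..\<tau>+1}) (\<lambda>(t,x). (mu t x)\<^sup>2 + (norm (Gmu t x))\<^sup>2) \<le> C"
    "\<And>t. 0 \<le> t \<Longrightarrow> integrable (lebesgue_on \<Omega>) (\<lambda>x. (norm (u t x))\<^sup>2)"
    "(\<lambda>(t,x). u t x) \<in> borel_measurable (ST \<Omega> {0..})"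
    "integrable (ST \<Omega> {0..}) (\<lambda>(t,x). (norm (u t x))\<^sup>2 + (norm (Gu t x))\<^sup>2)"
    "\<And>t. 0 \<le> t \<Longrightarrow> phi t \<in> borel_measurable (lebesgue_on \<Omega>)"
    "(\<lambda>(t,x). phi t x) \<in> borel_measurable (ST \<Omega> {0..})"
    "AE z in ST \<Omega> {0..}. \<bar>phi (fst z) (snd z)\<bar> < 1"
    "(\<lambda>(t,x). mu t x) \<in> borel_measurable (ST \<Omega> {0..})"
    "(\<lambda>(t,x). Gmu t x) \<in> borel_measurable (ST \<Omega> {0..})"
    "\<And>\<tau>. 0 \<le> \<tau> \<Longrightarrow> integrable (ST \<Omega> {\<tau>..\<tau>+1}) (\<lambda>(t,x). (mu t x)\<^sup>2 + (norm (Gmu t x))\<^sup>2)"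
    "AE x in lebesgue_on \<Omega>. phi 0 x = phi0 x"
proof -
  \<comment> \<open>The energy clause comes first, so that \<open>rule that; assumption\<close> takes Gu, Gphi and Gmu
    from it; the measurability clause for Gmu alone would also match u.\<close>
  obtain Gu :: "real \<Rightarrow> real^'n \<Rightarrow> real^'n^'n" and Gphi Gmu C where
    energy: "\<forall>t\<ge>0. let
        KE = (\<lambda>s. (1/2) * (LINT x|lebesgue_on \<Omega>. rho \<rho>1 \<rho>2 (phi t x) * (norm (u t x))\<^sup>2)
                 + stint \<Omega> s t (\<lambda>\<tau> x. \<nu> (phi \<tau> x) * frob (symgrad (Gu \<tau> x)) (symgrad (Gu \<tau> x)))
               \<le> (1/2) * (LINT x|lebesgue_on \<Omega>. rho \<rho>1 \<rho>2 (phi s x) * (norm (u s x))\<^sup>2)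
                 - stint \<Omega> s t (\<lambda>\<tau> x. (u \<tau> x \<bullet> Gmu \<tau> x) * phi \<tau> x));
        EE = (\<lambda>s. Eng \<Omega> F \<theta>0 (phi t) (Gphi t)
                 + ereal (stint \<Omega> s t (\<lambda>\<tau> x. m (phi \<tau> x) * (norm (Gmu \<tau> x))\<^sup>2))
               \<le> Eng \<Omega> F \<theta>0 (phi s) (Gphi s)
                 + ereal (stint \<Omega> s t (\<lambda>\<tau> x. (u \<tau> x \<bullet> Gmu \<tau> x) * phi \<tau> x)))
      in (KE 0 \<and> EE 0) \<and> (AE s in lebesgue_on {0..t}. KE s \<and> EE s)"
    and u: "\<forall>t\<ge>0. L2sigma \<Omega> (u t)" "(\<lambda>(t,x). u t x) \<in> borel_measurable (ST \<Omega> {0..})"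
      "integrable (ST \<Omega> {0..}) (\<lambda>(t,x). (norm (u t x))\<^sup>2 + (norm (Gu t x))\<^sup>2)"
    and phi: "\<forall>t\<ge>0. weak_grad \<Omega> (phi t) (Gphi t)" "(\<lambda>(t,x). phi t x) \<in> borel_measurable (ST \<Omega> {0..})"
      "AE z in ST \<Omega> {0..}. \<bar>phi (fst z) (snd z)\<bar> < 1" "AE x in lebesgue_on \<Omega>. phi 0 x = phi0 x"
    and mu: "(\<lambda>(t,x). mu t x) \<in> borel_measurable (ST \<Omega> {0..})"
      "(\<lambda>(t,x). Gmu t x) \<in> borel_measurable (ST \<Omega> {0..})"
      "\<forall>\<tau>\<ge>0. integrable (ST \<Omega> {\<tau>..\<tau>+1}) (\<lambda>(t,x). (mu t x)\<^sup>2 + (norm (Gmu t x))\<^sup>2) \<and>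
         integral\<^sup>L (ST \<Omega> {\<tau>..\<tau>+1}) (\<lambda>(t,x). (mu t x)\<^sup>2 + (norm (Gmu t x))\<^sup>2) \<le> C"
    using assms unfolding global_weak_solution_def by (elim exE conjE) (rule that; assumption)
  show ?thesis
    using energy u phi mu unfolding Let_def L2sigma_def L2_def weak_grad_def
    by (intro that[where Gu = Gu and Gphi = Gphi and Gmu = Gmu and C = C]) (auto elim: eventually_mono)
qed

lemma kinetic_energy_tendsto_zero:
  fixes \<Omega> :: "(real^'n) set" and u Gmu :: "real \<Rightarrow> real^'n \<Rightarrow> real^'n"
    and Gu :: "real \<Rightarrow> real^'n \<Rightarrow> real^'n^'n" and phi mu :: "real \<Rightarrow> real^'n \<Rightarrow> real"
  assumes \<Omega>: "\<Omega> \<in> lmeasurable" and rho_pos: "0 < \<rho>1" "0 < \<rho>2" and nu_nonneg: "\<And>s. 0 \<le> \<nu> s"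
    and phi0_bound: "AE x in lebesgue_on \<Omega>. \<bar>phi0 x\<bar> \<le> 1"
    and kinetic: "\<And>t. 0 \<le> t \<Longrightarrow> AE s in lebesgue_on {0..t}.
        (1/2) * (LINT x|lebesgue_on \<Omega>. rho \<rho>1 \<rho>2 (phi t x) * (norm (u t x))\<^sup>2)
          + stint \<Omega> s t (\<lambda>\<tau> x. \<nu> (phi \<tau> x) * frob (symgrad (Gu \<tau> x)) (symgrad (Gu \<tau> x)))
        \<le> (1/2) * (LINT x|lebesgue_on \<Omega>. rho \<rho>1 \<rho>2 (phi s x) * (norm (u s x))\<^sup>2)
          - stint \<Omega> s t (\<lambda>\<tau> x. (u \<tau> x \<bullet> Gmu \<tau> x) * phi \<tau> x)"
    and total: "\<And>t. 0 \<le> t \<Longrightarrow> Eng \<Omega> F \<theta>0 (phi t) (Gphi t)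
          + ereal (stint \<Omega> 0 t (\<lambda>\<tau> x. m (phi \<tau> x) * (norm (Gmu \<tau> x))\<^sup>2))
        \<le> Eng \<Omega> F \<theta>0 (phi 0) (Gphi 0) + ereal (stint \<Omega> 0 t (\<lambda>\<tau> x. (u \<tau> x \<bullet> Gmu \<tau> x) * phi \<tau> x))"
    and mu_le: "\<And>\<tau>. 0 \<le> \<tau> \<Longrightarrow>
        integral\<^sup>L (ST \<Omega> {\<tau>..\<tau>+1}) (\<lambda>(t,x). (mu t x)\<^sup>2 + (norm (Gmu t x))\<^sup>2) \<le> C"
    and u_int: "\<And>t. 0 \<le> t \<Longrightarrow> integrable (lebesgue_on \<Omega>) (\<lambda>x. (norm (u t x))\<^sup>2)"
    and u_meas: "(\<lambda>(t,x). u t x) \<in> borel_measurable (ST \<Omega> {0..})"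
    and u_Gu_int: "integrable (ST \<Omega> {0..}) (\<lambda>(t,x). (norm (u t x))\<^sup>2 + (norm (Gu t x))\<^sup>2)"
    and phi_meas_at: "\<And>t. 0 \<le> t \<Longrightarrow> phi t \<in> borel_measurable (lebesgue_on \<Omega>)"
    and phi_meas: "(\<lambda>(t,x). phi t x) \<in> borel_measurable (ST \<Omega> {0..})"
    and phi_lt_1: "AE z in ST \<Omega> {0..}. \<bar>phi (fst z) (snd z)\<bar> < 1"
    and mu_meas: "(\<lambda>(t,x). mu t x) \<in> borel_measurable (ST \<Omega> {0..})"
      "(\<lambda>(t,x). Gmu t x) \<in> borel_measurable (ST \<Omega> {0..})"
    and mu_int: "\<And>\<tau>. 0 \<le> \<tau> \<Longrightarrow>
        integrable (ST \<Omega> {\<tau>..\<tau>+1}) (\<lambda>(t,x). (mu t x)\<^sup>2 + (norm (Gmu t x))\<^sup>2)"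
    and phi_init: "AE x in lebesgue_on \<Omega>. phi 0 x = phi0 x"
  shows "((\<lambda>t. LINT x|lebesgue_on \<Omega>. (norm (u t x))\<^sup>2) \<longlongrightarrow> 0) at_top"
proof -
  have "AE x in lebesgue_on \<Omega>. \<bar>phi 0 x\<bar> \<le> 1"
    using phi_init phi0_bound by eventually_elim simp
  then have phi_bound: "AE x in lebesgue_on \<Omega>. \<bar>phi t x\<bar> \<le> 1" if "0 \<le> t" for t
    by (rule AE_abs_le_1_of_Eng_le[OF total[OF that]])
  have "0 \<le> integral\<^sup>L (ST \<Omega> {0..0+1}) (\<lambda>(t,x). (mu t x)\<^sup>2 + (norm (Gmu t x))\<^sup>2)"
    by (intro integral_nonneg_AE) (simp add: split_beta')
  then have "0 \<le> C"
    using mu_le[of 0] by linarith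
  define K where "K t = (1/2) * (LINT x|lebesgue_on \<Omega>. rho \<rho>1 \<rho>2 (phi t x) * (norm (u t x))\<^sup>2)" for t
  show ?thesis
  proof (rule local_energy_inequality.tendsto_zero,
      rule local_energy_inequality.intro[where c = "min \<rho>1 \<rho>2 / 2" and c' = "max \<rho>1 \<rho>2 / 2"
        and K = K and X = "\<lambda>s t. - stint \<Omega> s t (\<lambda>\<tau> x. (u \<tau> x \<bullet> Gmu \<tau> x) * phi \<tau> x)"
        and C = "C / 4" and T = "\<lambda>s. \<integral>\<^sup>+ z. ennreal ((norm (u (fst z) (snd z)))\<^sup>2) * indicator {s..} (fst z) \<partial>ST \<Omega> {0..}"])
    show "0 < min \<rho>1 \<rho>2 / 2" "0 \<le> max \<rho>1 \<rho>2 / 2" "0 \<le> C / 4"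
      using rho_pos \<open>0 \<le> C\<close> by auto
    show "min \<rho>1 \<rho>2 / 2 * (LINT x|lebesgue_on \<Omega>. (norm (u t x))\<^sup>2) \<le> K t"
      and "K t \<le> max \<rho>1 \<rho>2 / 2 * (LINT x|lebesgue_on \<Omega>. (norm (u t x))\<^sup>2)" if "0 \<le> t" for t
      using integral_rho_weighted_bounds[OF rho_pos phi_meas_at[OF that] phi_bound[OF that] u_int[OF that]]
      by (simp_all add: K_def)
    show "AE s in lebesgue_on {0..t}. K t \<le> K s + - stint \<Omega> s t (\<lambda>\<tau> x. (u \<tau> x \<bullet> Gmu \<tau> x) * phi \<tau> x)"
      if "0 \<le> t" for t
      using kinetic[OF that]
    proof eventually_elim
      case (elim s)
      moreover have "0 \<le> stint \<Omega> s t (\<lambda>\<tau> x. \<nu> (phi \<tau> x) * frob (symgrad (Gu \<tau> x)) (symgrad (Gu \<tau> x)))"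
        using nu_nonneg frob_self_nonneg by (intro stint_nonneg mult_nonneg_nonneg)
      ultimately show ?case by (simp add: K_def)
    qed
    show "ennreal \<bar>- stint \<Omega> s t (\<lambda>\<tau> x. (u \<tau> x \<bullet> Gmu \<tau> x) * phi \<tau> x)\<bar>
        \<le> ennreal a * (\<integral>\<^sup>+ z. ennreal ((norm (u (fst z) (snd z)))\<^sup>2) * indicator {s..} (fst z) \<partial>ST \<Omega> {0..})
          + ennreal (C / 4 / a)"
      if "0 \<le> s" "s \<le> t" "t \<le> s + 1" "0 < a" for s t a
      using exchange_term_bound[OF \<Omega> u_meas phi_meas mu_meas phi_lt_1 mu_int mu_le that] that by simp
    show "((\<lambda>s. \<integral>\<^sup>+ z. ennreal ((norm (u (fst z) (snd z)))\<^sup>2) * indicator {s..} (fst z) \<partial>ST \<Omega> {0..}) \<longlongrightarrow> 0) at_top"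
      by (rule space_time_tail_tendsto_zero[OF u_meas u_Gu_int])
    show "(\<integral>\<^sup>+ s. ennreal (LINT x|lebesgue_on \<Omega>. (norm (u s x))\<^sup>2) \<partial>lebesgue_on {t - 1..t})
        \<le> (\<integral>\<^sup>+ z. ennreal ((norm (u (fst z) (snd z)))\<^sup>2) * indicator {t - 1..} (fst z) \<partial>ST \<Omega> {0..})"
      if "1 \<le> t" for t
      using that by (intro nn_integral_L2_norm_le_tail[OF \<Omega> u_meas u_int]) auto
  qed simp
qed

theorem lemma3p7:
  fixes \<Omega> :: "(real^'n) set"
    and m F \<nu> :: "real \<Rightarrow> real"
    and \<theta>0 \<theta> \<rho>1 \<rho>2 m_lo m_hi \<nu>_lo \<nu>_hi k :: real
    and u0 :: "real^'n \<Rightarrow> real^'n" and phi0 :: "real^'n \<Rightarrow> real"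
    and u :: "real \<Rightarrow> real^'n \<Rightarrow> real^'n" and phi mu :: "real \<Rightarrow> real^'n \<Rightarrow> real"
  assumes dim: "CARD('n) = 2 \<or> CARD('n) = 3"
    and dom: "C3_domain \<Omega>"
    and m_cont: "continuous_on {-1..1} m"
    and m_bds: "0 < m_lo" "\<forall>s\<in>{-1..1}. m_lo \<le> m s \<and> m s \<le> m_hi"
    and theta0: "0 < \<theta>0"
    and F_cont: "continuous_on {-1..1} F"
    and F_C2: "\<forall>s\<in>{-1<..<1}. (F has_real_derivative deriv F s) (at s) \<and>
                   (deriv F has_real_derivative deriv (deriv F) s) (at s)"
              "continuous_on {-1<..<1} (deriv (deriv F))"
    and F_sing: "filterlim (deriv F) at_bot (at_right (-1))" "filterlim (deriv F) at_top (at_left 1)"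
    and F_convex: "0 < \<theta>" "\<theta> < \<theta>0" "\<forall>s\<in>{-1<..<1}. deriv (deriv F) s \<ge> \<theta>"
    and F_0: "F 0 = 0" "deriv F 0 = 0"
    and nu_W1inf: "\<exists>L. L-lipschitz_on UNIV \<nu>"
    and nu_bds: "0 < \<nu>_lo" "\<forall>s. \<nu>_lo \<le> \<nu> s \<and> \<nu> s \<le> \<nu>_hi"
    and rho_pos: "0 < \<rho>1" "0 < \<rho>2"
    and u0: "L2sigma \<Omega> u0"
    and phi0: "0 \<le> k" "k < 1" "phi0 \<in> Hk \<Omega> k" "mean \<Omega> phi0 \<in> {-1<..<1}"
    and sol: "global_weak_solution \<Omega> m F \<theta>0 \<nu> \<rho>1 \<rho>2 u0 phi0 u phi mu"
  shows "((\<lambda>t. sqrt (LINT x|lebesgue_on \<Omega>. (norm (u t x))\<^sup>2)) \<longlongrightarrow> 0) at_top"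
proof -
  have \<Omega>: "\<Omega> \<in> lmeasurable"
    using dom by (auto simp: C3_domain_def intro: lmeasurable_open)
  have phi0_bound: "AE x in lebesgue_on \<Omega>. \<bar>phi0 x\<bar> \<le> 1"
    using phi0(3) by (simp add: Hk_def)
  have nu_nonneg: "0 \<le> \<nu> s" for s
    using nu_bds by (meson less_le_trans less_imp_le)
  \<comment> \<open>The premises of \<open>kinetic_energy_tendsto_zero\<close> are the facts of
    \<open>global_weak_solution_facts\<close> in the same order, energy inequalities first, so that
    \<open>assumption\<close> fixes Gu, Gphi, Gmu and C from the clauses that determine them.\<close>
  have "((\<lambda>t. LINT x|lebesgue_on \<Omega>. (norm (u t x))\<^sup>2) \<longlongrightarrow> 0) at_top"
    by (rule global_weak_solution_facts[OF sol],
        rule kinetic_energy_tendsto_zero[OF \<Omega> rho_pos nu_nonneg phi0_bound]; assumption)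
  then show ?thesis
    using tendsto_real_sqrt by fastforce
qed

end
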